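(* Consider the ViSE model described in the context, with $n$ participants, $\ell$ egoists and $g=n-\ell$ group members ($1\le\ell\le n-1$), $\mu\in\mathbb{R}$, $\sigma>0$ and majority threshold $\alpha\in[0,1)$. Let $\delta=\ell/n$, $\gamma=\alpha+\delta-1$, $\beta=\ell/(n-\ell)$. Then the expected one-step capital increment of the society, as a function of the group's claims threshold $t\in\mathbb{R}$, reaches its maximum at $$t_0=\frac{\beta}{F_{\gamma n}-F_{\alpha n}}\Big(\mu^+(\mu,\sigma,\ell,\alpha n)-\mu^+(\mu,\sigma,\ell,\gamma n)\Big).$$
   Context: ViSE model (one voting step). A society consists of $n$ participants: $\ell$ "egoists" and $g=n-\ell$ "group members", $1\le\ell\le n-1$. Fix $\mu\in\mathbb{R}$, $\sigma>0$, a majority threshold $\alpha$ and a group claims threshold $t\in\mathbb{R}$. A proposal is a random vector $(\zeta_1,\dots,\zeta_n)$ of independent $N(\mu,\sigma^2)$ random variables, $\zeta_i$ being the proposed capital increment of participant $i$. Each egoist votes for the proposal iff his own component is strictly positive. All group members vote for the proposal iff the arithmetic mean of the group members' components is strictly greater than $t$; otherwise they all vote against. The proposal is accepted iff the number of votes for it is strictly greater than $\alpha n$. If accepted, each participant's capital increment equals his component; otherwise it is $0$. The expected one-step capital increment of the society is the expectation of the sum of all participants' increments (equivalently, up to the factor $n$, the expected increment of a uniformly randomly selected participant). $F$ denotes the standard normal distribution function. $p=F(\mu/\sigma)$, $q=1-p$, and for real $\xi$, $F_\xi=\sum_{x=\max(0,[\xi]+1)}^{\ell}\binom{\ell}{x}p^xq^{\ell-x}$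 ($[\xi]$ the integer part; empty sum $=0$), the probability that more than $\xi$ egoists vote for the proposal. For integer $\ell\ge1$ and real $\ell_0$, $\mu^+(\mu,\sigma,\ell,\ell_0)=\mathrm{M}\big(\xi_1\cdot\mathbf{1}\{\#\{i:\xi_i>0\}>\ell_0\}\big)$ where $\xi_1,\dots,\xi_\ell$ are i.i.d. $N(\mu,\sigma^2)$. *)

theory Defs
  imports "HOL-Probability.Probability"
begin

definition Phi :: "real \<Rightarrow> real" where
  "Phi x = cdf (density lborel std_normal_density) x"

definition iid_normal :: "nat \<Rightarrow> real \<Rightarrow> real \<Rightarrow> (nat \<Rightarrow> real) measure" where
  "iid_normal k mu sg = PiM {..<k} (\<lambda>_. density lborel (normal_density mu sg))"

definition F_xi :: "real \<Rightarrow> real \<Rightarrow> nat \<Rightarrow> real \<Rightarrow> real" where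
  "F_xi mu sg l xi =
     (let p = Phi (mu / sg); q = 1 - p in
      \<Sum>x \<in> {nat (max 0 (\<lfloor>xi\<rfloor> + 1))..l}. real (l choose x) * p ^ x * q ^ (l - x))"

definition mu_plus :: "real \<Rightarrow> real \<Rightarrow> nat \<Rightarrow> real \<Rightarrow> real" where
  "mu_plus mu sg l l0 =
     integral\<^sup>L (iid_normal l mu sg)
       (\<lambda>\<xi>. \<xi> 0 * (if real (card {i \<in> {..<l}. \<xi> i > 0}) > l0 then 1 else 0))"

(* Participants 0..<l are egoists, l..<n are group members. *)
definition votes_for :: "nat \<Rightarrow> nat \<Rightarrow> real \<Rightarrow> (nat \<Rightarrow> real) \<Rightarrow> nat" where
  "votes_for n l t \<zeta> =
     card {i \<in> {..<l}. \<zeta> i > 0}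
     + (if (\<Sum>i\<in>{l..<n}. \<zeta> i) / real (n - l) > t then n - l else 0)"

definition accepted :: "nat \<Rightarrow> nat \<Rightarrow> real \<Rightarrow> real \<Rightarrow> (nat \<Rightarrow> real) \<Rightarrow> bool" where
  "accepted n l alpha t \<zeta> \<longleftrightarrow> real (votes_for n l t \<zeta>) > alpha * real n"

definition expected_increment ::
    "nat \<Rightarrow> nat \<Rightarrow> real \<Rightarrow> real \<Rightarrow> real \<Rightarrow> real \<Rightarrow> real" where
  "expected_increment n l mu sg alpha t =
     integral\<^sup>L (iid_normal n mu sg)
       (\<lambda>\<zeta>. if accepted n l alpha t \<zeta> then (\<Sum>i\<in>{..<n}. \<zeta> i) else 0)"

end

theory Submission
  imports Defs
begin

text \<open>Condition on the group members' components and let \<open>s\<close> be their sum. The group's vote only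
  decides how many egoists must vote for acceptance: more than \<open>\<gamma>n\<close> if the group votes for,
  more than \<open>\<alpha>n\<close> otherwise. Since the egoists' components are exchangeable, the conditional
  expected increment for the requirement \<open>c\<close> is \<open>\<ell>\<mu>\<^sup>+(\<mu>,\<sigma>,\<ell>,c) + s F\<^sub>c\<close>, an affine
  function of \<open>s\<close>. As \<open>F\<^sub>\<gamma>\<^sub>n > F\<^sub>\<alpha>\<^sub>n\<close>, the two affine functions cross exactly at
  \<open>s/(n-\<ell>) = t\<^sub>0\<close>, so the threshold \<open>t\<^sub>0\<close> makes the group choose the better alternative for
  every value of \<open>s\<close>; integrating over \<open>s\<close> proves optimality.\<close>

abbreviation normal_measure :: "real \<Rightarrow> real \<Rightarrow> real measure" where
  "normal_measure mu sg \<equiv> density lborel (normal_density mu sg)"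

lemma integrable_normal_measure_id:
  "0 < sg \<Longrightarrow> integrable (normal_measure mu sg) (\<lambda>x. x)"
  by (subst integrable_density) (auto intro: integrable_normal_moment_nz_1)

lemma normal_measure_pos:
  assumes "0 < sg" and A[measurable]: "A \<in> sets borel" and "emeasure lborel A \<noteq> 0"
  shows "0 < measure (normal_measure mu sg) A"
proof -
  interpret prob_space "normal_measure mu sg"
    using assms(1) by (rule prob_space_normal_density)
  have "AE x in lborel. x \<notin> A" if "emeasure (normal_measure mu sg) A = 0"
  proof -
    have "(\<integral>\<^sup>+x. ennreal (normal_density mu sg x) * indicator A x \<partial>lborel) = 0"
      using that by (simp add: emeasure_density)
    then have "AE x in lborel. ennreal (normal_density mu sg x) * indicator A x = 0"
      by (subst (asm) nn_integral_0_iff_AE) auto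
    moreover have "normal_density mu sg x \<noteq> 0" for x
      using normal_density_pos[OF assms(1), of mu x] by linarith
    ultimately show ?thesis
      by (auto elim!: eventually_mono simp: indicator_def)
  qed
  with assms(3) have "emeasure (normal_measure mu sg) A \<noteq> 0"
    by (auto simp: AE_iff_measurable[OF _ refl])
  then show ?thesis
    by (simp add: emeasure_eq_measure zero_less_measure_iff)
qed

lemma measure_normal_greaterThan_0:
  assumes "0 < sg"
  shows "measure (normal_measure mu sg) {0<..} = Phi (mu / sg)"
proof -
  let ?S = "density lborel std_normal_density"
  interpret S: prob_space ?S by (rule prob_space_normal_density) simp
  have "distributed ?S lborel (\<lambda>x. x) std_normal_density"
    by (simp add: distributed_def distr_id2)
  then have "distributed ?S lborel (\<lambda>x. mu + (- sg) * x)
      (normal_density (mu + (- sg) * 0) (\<bar>- sg\<bar> * 1))"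
    by (rule S.normal_density_affine) (use assms in auto)
  then have "normal_measure mu sg = distr ?S lborel (\<lambda>x. mu + (- sg) * x)"
    using assms by (simp add: distributed_def)
  then have "measure (normal_measure mu sg) {0<..} = measure ?S {x. 0 < mu + (- sg) * x}"
    by (simp add: measure_distr vimage_def)
  also have "{x. 0 < mu + (- sg) * x} = {..< mu/sg}"
    using assms by (auto simp: field_simps)
  also have "measure ?S {..< mu/sg} = measure ?S {.. mu/sg}"
  proof -
    have "measure ?S {mu/sg} = 0"
      by (simp add: measure_def emeasure_density)
    moreover have "{.. mu/sg} = {..< mu/sg} \<union> {mu/sg}"
      by auto
    ultimately show ?thesis
      using S.finite_measure_Union[of "{..< mu/sg}" "{mu/sg}"] by simp
  qed
  finally show ?thesis
    by (simp add: Phi_def cdf_def)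
qed

lemma measure_normal_atMost_0:
  assumes "0 < sg"
  shows "measure (normal_measure mu sg) {..0} = 1 - Phi (mu / sg)"
proof -
  interpret prob_space "normal_measure mu sg"
    using assms by (rule prob_space_normal_density)
  have "{..0::real} = space (normal_measure mu sg) - {0<..}"
    by auto
  then show ?thesis
    using prob_compl[of "{0<..}"] measure_normal_greaterThan_0[OF assms] by simp
qed

lemma Phi_pos: "0 < Phi x"
proof -
  have "emeasure lborel {1..2::real} \<le> emeasure lborel {0::real<..}"
    by (rule emeasure_mono) auto
  then have "0 < measure (normal_measure x 1) {0<..}"
    by (intro normal_measure_pos) auto
  then show ?thesis
    using measure_normal_greaterThan_0[of 1 x] by simp
qed

lemma Phi_less_1: "Phi x < 1"
proof -
  have "emeasure lborel {-2..-1::real} \<le> emeasure lborel {..0::real}"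
    by (rule emeasure_mono) auto
  then have "0 < measure (normal_measure x 1) {..0}"
    by (intro normal_measure_pos) auto
  then show ?thesis
    using measure_normal_atMost_0[of 1 x] by simp
qed

definition count_pos :: "nat set \<Rightarrow> (nat \<Rightarrow> real) \<Rightarrow> real" where
  "count_pos I y = real (card {i\<in>I. 0 < y i})"

lemma count_pos_eq_sum:
  "finite I \<Longrightarrow> count_pos I y = (\<Sum>i\<in>I. if 0 < y i then 1 else 0)"
  unfolding count_pos_def by (simp add: sum.If_cases Int_def conj_commute)

lemma F_xi_eq_sum:
  "F_xi mu sg l c = (\<Sum>k\<in>{k\<in>{0..l}. c < real k}.
     real (l choose k) * Phi (mu / sg) ^ k * (1 - Phi (mu / sg)) ^ (l - k))"
proof -
  have "{nat (max 0 (\<lfloor>c\<rfloor> + 1))..l} = {k\<in>{0..l}. c < real k}"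
    by (auto simp: le_nat_iff floor_less_iff[symmetric]) linarith+
  then show ?thesis
    by (simp add: F_xi_def Let_def)
qed

lemma F_xi_less:
  assumes "b < real k" "real k \<le> a" "k \<le> l"
  shows "F_xi mu sg l a < F_xi mu sg l b"
proof -
  define weight where
    "weight j = real (l choose j) * Phi (mu / sg) ^ j * (1 - Phi (mu / sg)) ^ (l - j)" for j
  have weight_pos: "0 < weight j" if "j \<le> l" for j
    using that Phi_pos Phi_less_1 by (simp add: weight_def)
  have "sum weight {j\<in>{0..l}. a < real j} < weight k + sum weight {j\<in>{0..l}. a < real j}"
    using weight_pos assms(3) by simp
  also have "\<dots> = sum weight (insert k {j\<in>{0..l}. a < real j})"
    using assms(2) by simp
  also have "\<dots> \<le> sum weight {j\<in>{0..l}. b < real j}"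
    using assms weight_pos by (intro sum_mono2) (auto intro: less_imp_le)
  finally show ?thesis
    by (simp add: F_xi_eq_sum weight_def)
qed

lemma F_xi_less_shift:
  assumes "0 \<le> a" "a < real l + real g" "1 \<le> g"
  shows "F_xi mu sg l a < F_xi mu sg l (a - real g)"
proof (rule F_xi_less)
  have "real (nat \<lfloor>a\<rfloor>) \<le> a"
    using assms(1) by simp
  then show "a - real g < real (min l (nat \<lfloor>a\<rfloor>))" "real (min l (nat \<lfloor>a\<rfloor>)) \<le> a"
    using assms by (auto simp: min_def) linarith+
qed simp

definition effective_threshold :: "nat \<Rightarrow> nat \<Rightarrow> real \<Rightarrow> real \<Rightarrow> real \<Rightarrow> real" where
  "effective_threshold n l alpha t s =
     (if t < s / real (n - l) then alpha * real n - real (n - l) else alpha * real n)"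

definition conditional_increment :: "real \<Rightarrow> real \<Rightarrow> nat \<Rightarrow> real \<Rightarrow> real \<Rightarrow> real" where
  "conditional_increment mu sg l c s = real l * mu_plus mu sg l c + s * F_xi mu sg l c"

lemma accepted_iff_effective_threshold:
  "accepted n l alpha t \<zeta> \<longleftrightarrow>
     effective_threshold n l alpha t (\<Sum>i\<in>{l..<n}. \<zeta> i) < count_pos {..<l} \<zeta>"
  unfolding accepted_def votes_for_def effective_threshold_def count_pos_def by auto

lemma increment_merge:
  assumes "l \<le> n"
  shows "(if accepted n l alpha t (merge {l..<n} {..<l} (x, y))
          then \<Sum>i<n. merge {l..<n} {..<l} (x, y) i else 0)
    = (sum y {..<l} + sum x {l..<n}) *
      (if effective_threshold n l alpha t (sum x {l..<n}) < count_pos {..<l} y then 1 else 0)"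
proof -
  let ?z = "merge {l..<n} {..<l} (x, y)"
  have "{..<n} = {l..<n} \<union> {..<l}"
    using assms by auto
  then have "(\<Sum>i<n. ?z i) = sum ?z ({l..<n} \<union> {..<l})"
    by simp
  also have "\<dots> = sum ?z {l..<n} + sum ?z {..<l}"
    by (rule sum.union_disjoint) auto
  also have "\<dots> = sum x {l..<n} + sum y {..<l}"
    by (intro arg_cong2[where f = "(+)"] sum.cong) (auto simp: merge_def)
  finally have "(\<Sum>i<n. ?z i) = sum y {..<l} + sum x {l..<n}"
    by simp
  moreover have "count_pos {..<l} ?z = count_pos {..<l} y"
    unfolding count_pos_def by (auto simp: merge_def intro!: arg_cong[where f = card])
  moreover have "(\<Sum>i\<in>{l..<n}. ?z i) = sum x {l..<n}"
    by (simp add: merge_def)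
  ultimately show ?thesis
    by (simp add: accepted_iff_effective_threshold)
qed

locale normal_sample =
  fixes mu sg :: real
  assumes sg_pos: "0 < sg"
begin

abbreviation sample :: "nat set \<Rightarrow> (nat \<Rightarrow> real) measure" where
  "sample I \<equiv> PiM I (\<lambda>_. normal_measure mu sg)"

lemma prob_space_normal_measure: "prob_space (normal_measure mu sg)"
  using sg_pos by (rule prob_space_normal_density)

lemma prob_space_sample: "prob_space (sample I)"
  by (rule prob_space_PiM) (rule prob_space_normal_measure)

lemma measurable_sample_component:
  assumes "i \<in> I"
  shows "(\<lambda>y. y i) \<in> borel_measurable (sample I)"
proof -
  have "(\<lambda>y. y i) \<in> measurable (sample I) (normal_measure mu sg)"
    using assms by (rule measurable_component_singleton)
  then show ?thesis
    using measurable_cong_sets[OF refl, of "normal_measure mu sg" borel] by simp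
qed

lemma integrable_sample_component:
  assumes "i \<in> I"
  shows "integrable (sample I) (\<lambda>y. y i)"
proof -
  have "distr (sample I) (normal_measure mu sg) (\<lambda>y. y i) = normal_measure mu sg"
    by (rule distr_PiM_component) (use assms prob_space_normal_measure in auto)
  then have "integrable (distr (sample I) (normal_measure mu sg) (\<lambda>y. y i)) (\<lambda>x. x)"
    using integrable_normal_measure_id[OF sg_pos] by simp
  then show ?thesis
    by (subst (asm) integrable_distr_eq) (auto intro: measurable_sample_component[OF assms])
qed

lemma borel_measurable_count_pos:
  assumes "finite I" "I \<subseteq> J"
  shows "count_pos I \<in> borel_measurable (sample J)"
proof -
  have "(\<lambda>y. \<Sum>i\<in>I. if 0 < y i then 1 else 0 :: real) \<in> borel_measurable (sample J)"
  proof (rule borel_measurable_sum)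
    fix i assume "i \<in> I"
    have "(\<lambda>x::real. if 0 < x then 1 else 0 :: real) \<in> borel_measurable borel"
      by measurable
    then show "(\<lambda>y. if 0 < y i then 1 else 0 :: real) \<in> borel_measurable (sample J)"
      using measurable_compose[OF measurable_sample_component] \<open>i \<in> I\<close> assms(2) by blast
  qed
  moreover have "count_pos I = (\<lambda>y. \<Sum>i\<in>I. if 0 < y i then 1 else 0)"
    using assms(1) by (simp add: fun_eq_iff count_pos_eq_sum)
  ultimately show ?thesis
    by simp
qed

lemma borel_measurable_count_indicator:
  assumes "finite I" "I \<subseteq> J"
  shows "(\<lambda>y. if c < count_pos I y then 1 else 0 :: real) \<in> borel_measurable (sample J)"
proof -
  have "(\<lambda>x::real. if c < x then 1 else 0 :: real) \<in> borel_measurable borel"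
    by measurable
  then show ?thesis
    using measurable_compose[OF borel_measurable_count_pos[OF assms]] by blast
qed

lemma integrable_count_indicator:
  assumes "finite I" "I \<subseteq> J"
  shows "integrable (sample J) (\<lambda>y. if c < count_pos I y then 1 else 0 :: real)"
proof -
  interpret prob_space "sample J"
    by (rule prob_space_sample)
  show ?thesis
    by (rule integrable_const_bound[where B = 1]) (auto intro: borel_measurable_count_indicator[OF assms])
qed

lemma integrable_component_times_count_indicator:
  assumes "finite I" "I \<subseteq> J" "j \<in> J"
  shows "integrable (sample J) (\<lambda>y. y j * (if c < count_pos I y then 1 else 0 :: real))"
proof (rule Bochner_Integration.integrable_bound[OF integrable_sample_component[OF assms(3)]])
  show "(\<lambda>y. y j * (if c < count_pos I y then 1 else 0 :: real)) \<in> borel_measurable (sample J)"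
    by (intro borel_measurable_times measurable_sample_component[OF assms(3)]
        borel_measurable_count_indicator[OF assms(1,2)])
qed auto

lemma measure_sample_orthant:
  assumes "finite I" "A \<subseteq> I"
  shows "measure (sample I) (PiE I (\<lambda>i. if i \<in> A then {0<..} else {..0}))
       = Phi (mu / sg) ^ card A * (1 - Phi (mu / sg)) ^ (card I - card A)"
proof -
  interpret finite_product_prob_space "\<lambda>_. normal_measure mu sg" I
    by (intro finite_product_prob_space.intro finite_product_sigma_finite.intro
        product_prob_space.intro product_sigma_finite.intro finite_product_sigma_finite_axioms.intro
        product_prob_space_axioms.intro)
       (simp_all add: assms(1) prob_space_normal_measure prob_space_imp_sigma_finite)
  have "measure (sample I) (PiE I (\<lambda>i. if i \<in> A then {0<..} else {..0}))
     = (\<Prod>i\<in>I. measure (normal_measure mu sg) (if i \<in> A then {0<..} else {..0}))"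
    by (rule finite_measure_PiM_emb) auto
  also have "\<dots> = (\<Prod>i\<in>I. if i \<in> A then Phi (mu / sg) else 1 - Phi (mu / sg))"
    by (intro prod.cong)
       (auto simp: measure_normal_greaterThan_0[OF sg_pos] measure_normal_atMost_0[OF sg_pos])
  also have "\<dots> = Phi (mu / sg) ^ card (I \<inter> A) * (1 - Phi (mu / sg)) ^ card (I - A)"
    using assms(1) by (simp add: prod.If_cases Diff_eq)
  finally show ?thesis
    using assms by (simp add: Int_absorb1 card_Diff_subset finite_subset)
qed

text \<open>The event that exactly the components in \<open>A\<close> are positive is an orthant; summing over the
  sets \<open>A\<close> with more than \<open>c\<close> elements gives the binomial tail.\<close>

lemma integral_count_indicator:
  assumes "finite I"
  shows "(\<integral>y. (if c < count_pos I y then 1 else 0) \<partial>sample I)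
     = (\<Sum>k\<in>{k\<in>{0..card I}. c < real k}.
          real (card I choose k) * Phi (mu / sg) ^ k * (1 - Phi (mu / sg)) ^ (card I - k))"
proof -
  define orthant where "orthant A = PiE I (\<lambda>i. if i \<in> A then {0<..} else {..0::real})" for A
  define S where "S = {A. A \<subseteq> I \<and> c < real (card A)}"
  define p where "p = Phi (mu / sg)"
  interpret prob_space "sample I"
    by (rule prob_space_sample)
  have finite_S: "finite S"
    unfolding S_def using assms by (auto intro: finite_subset[of _ "Pow I"])
  have orthant_sets: "orthant A \<in> sets (sample I)" for A
    unfolding orthant_def using assms by (intro sets_PiM_I_finite) auto
  have indicator_eq: "(if c < count_pos I y then 1 else 0) = (\<Sum>A\<in>S. indicator (orthant A) y :: real)"
    if "y \<in> space (sample I)" for y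
  proof -
    define Y where "Y = {i\<in>I. 0 < y i}"
    have "indicator (orthant A) y = (if Y = A then 1 else 0 :: real)" if "A \<in> S" for A
    proof -
      have "y \<in> orthant A \<longleftrightarrow> Y = A"
        using \<open>y \<in> space (sample I)\<close> \<open>A \<in> S\<close> unfolding orthant_def Y_def S_def
        by (auto simp: space_PiM PiE_iff split: if_splits)
      then show ?thesis
        by (simp add: indicator_def)
    qed
    then have "(\<Sum>A\<in>S. indicator (orthant A) y :: real) = (\<Sum>A\<in>S. if Y = A then 1 else 0)"
      by (intro sum.cong) auto
    also have "\<dots> = (if Y \<in> S then 1 else 0)"
      using finite_S by simp
    also have "(Y \<in> S) = (c < count_pos I y)"
      by (simp add: S_def Y_def count_pos_def)
    finally show ?thesis
      by simp
  qed
  have "(\<integral>y. (if c < count_pos I y then 1 else 0) \<partial>sample I)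
      = (\<integral>y. (\<Sum>A\<in>S. indicator (orthant A) y :: real) \<partial>sample I)"
    by (rule Bochner_Integration.integral_cong[OF refl]) (rule indicator_eq)
  also have "\<dots> = (\<Sum>A\<in>S. measure (sample I) (orthant A))"
    by (subst Bochner_Integration.integral_sum)
       (auto intro!: integrable_real_indicator orthant_sets
             simp: less_top[symmetric] sets.Int_space_eq2[OF orthant_sets])
  also have "\<dots> = (\<Sum>A\<in>S. p ^ card A * (1 - p) ^ (card I - card A))"
    unfolding orthant_def p_def using assms by (intro sum.cong) (auto simp: S_def measure_sample_orthant)
  also have "\<dots> = (\<Sum>k\<in>{k\<in>{0..card I}. c < real k}. \<Sum>A | A \<in> S \<and> card A = k.
                      p ^ card A * (1 - p) ^ (card I - card A))"
    by (rule sum.group[symmetric]) (use finite_S assms in \<open>auto simp: S_def intro: card_mono\<close>)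
  also have "\<dots> = (\<Sum>k\<in>{k\<in>{0..card I}. c < real k}.
                      real (card I choose k) * p ^ k * (1 - p) ^ (card I - k))"
  proof (rule sum.cong[OF refl])
    fix k assume "k \<in> {k\<in>{0..card I}. c < real k}"
    then have "{A. A \<in> S \<and> card A = k} = {A. A \<subseteq> I \<and> card A = k}"
      by (auto simp: S_def)
    then show "(\<Sum>A | A \<in> S \<and> card A = k. p ^ card A * (1 - p) ^ (card I - card A))
       = real (card I choose k) * p ^ k * (1 - p) ^ (card I - k)"
      using n_subsets[OF assms, of k] by simp
  qed
  finally show ?thesis
    by (simp add: p_def)
qed

lemma F_xi_eq_integral:
  "F_xi mu sg l c = (\<integral>y. (if c < count_pos {..<l} y then 1 else 0) \<partial>sample {..<l})"
  by (simp add: integral_count_indicator F_xi_eq_sum)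

lemma mu_plus_eq_integral:
  "mu_plus mu sg l c = (\<integral>y. y 0 * (if c < count_pos {..<l} y then 1 else 0) \<partial>sample {..<l})"
  by (simp add: mu_plus_def iid_normal_def count_pos_def)

text \<open>Permuting coordinates preserves both the product measure and the number of positive
  components, so every component contributes equally.\<close>

lemma integral_component_times_count_indicator_swap:
  assumes "finite I" "i \<in> I" "j \<in> I"
  shows "(\<integral>y. y i * (if c < count_pos I y then 1 else 0) \<partial>sample I)
       = (\<integral>y. y j * (if c < count_pos I y then 1 else 0) \<partial>sample I)"
proof -
  define f where "f = Transposition.transpose i j"
  define swap where "swap y = (\<lambda>k\<in>I. y (f k))" for y :: "nat \<Rightarrow> real"
  define g where "g y = y j * (if c < count_pos I y then 1 else 0 :: real)" for y
  have f_in: "f \<in> I \<rightarrow> I"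
    using assms by (auto simp: f_def Transposition.transpose_def)
  have "distr (sample I) (sample I) swap = sample I"
    unfolding swap_def f_def
    using distr_PiM_reindex[of I "\<lambda>_. normal_measure mu sg" "Transposition.transpose i j" I]
      prob_space_normal_measure f_in[unfolded f_def]
    by (auto intro: inj_on_subset)
  moreover have "swap \<in> measurable (sample I) (sample I)"
    unfolding swap_def
    by (rule measurable_restrict) (use f_in in \<open>auto intro!: measurable_sample_component\<close>)
  moreover have "g \<in> borel_measurable (sample I)"
    unfolding g_def using assms
    by (intro borel_measurable_times measurable_sample_component borel_measurable_count_indicator) auto
  ultimately have "(\<integral>y. g y \<partial>sample I) = (\<integral>y. g (swap y) \<partial>sample I)"
    by (metis integral_distr)
  also have "\<dots> = (\<integral>y. y i * (if c < count_pos I y then 1 else 0) \<partial>sample I)"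
  proof (rule Bochner_Integration.integral_cong[OF refl])
    fix y
    have "{k\<in>I. 0 < swap y k} = f ` {k\<in>I. 0 < y k}"
      using f_in assms by (auto simp: swap_def f_def image_iff Transposition.transpose_def)
    then have "count_pos I (swap y) = count_pos I y"
      unfolding count_pos_def f_def by (simp add: card_image inj_on_subset)
    then show "g (swap y) = y i * (if c < count_pos I y then 1 else 0)"
      using assms by (simp add: g_def swap_def f_def)
  qed
  finally show ?thesis
    by (simp add: g_def)
qed

lemma integrable_sum_times_count_indicator:
  "integrable (sample {..<l})
     (\<lambda>y. (sum y {..<l} + s) * (if c < count_pos {..<l} y then 1 else 0 :: real))"
proof -
  have "(\<lambda>y. (sum y {..<l} + s) * (if c < count_pos {..<l} y then 1 else 0 :: real))
      = (\<lambda>y. (\<Sum>i<l. y i * (if c < count_pos {..<l} y then 1 else 0))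
             + s * (if c < count_pos {..<l} y then 1 else 0))"
    by (simp add: fun_eq_iff distrib_right sum_distrib_right)
  moreover have "integrable (sample {..<l}) (\<lambda>y. (\<Sum>i<l. y i * (if c < count_pos {..<l} y then 1 else 0))
             + s * (if c < count_pos {..<l} y then 1 else 0))"
  proof (rule Bochner_Integration.integrable_add)
    show "integrable (sample {..<l}) (\<lambda>y. \<Sum>i<l. y i * (if c < count_pos {..<l} y then 1 else 0))"
      by (intro Bochner_Integration.integrable_sum integrable_component_times_count_indicator) auto
    show "integrable (sample {..<l}) (\<lambda>y. s * (if c < count_pos {..<l} y then 1 else 0))"
      by (intro integrable_mult_right integrable_count_indicator) auto
  qed
  ultimately show ?thesis
    by simp
qed

lemma integral_sum_times_count_indicator:
  assumes "1 \<le> l"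
  shows "(\<integral>y. (sum y {..<l} + s) * (if c < count_pos {..<l} y then 1 else 0) \<partial>sample {..<l})
       = conditional_increment mu sg l c s"
proof -
  define ind where "ind y = (if c < count_pos {..<l} y then 1 else 0 :: real)" for y
  have component: "integrable (sample {..<l}) (\<lambda>y. y i * ind y)" if "i < l" for i
    unfolding ind_def using that by (intro integrable_component_times_count_indicator) auto
  have "(\<integral>y. (sum y {..<l} + s) * ind y \<partial>sample {..<l})
      = (\<integral>y. (\<Sum>i<l. y i * ind y) + s * ind y \<partial>sample {..<l})"
    by (simp add: distrib_right sum_distrib_right)
  also have "\<dots> = (\<integral>y. (\<Sum>i<l. y i * ind y) \<partial>sample {..<l})
                   + (\<integral>y. s * ind y \<partial>sample {..<l})"
  proof (rule Bochner_Integration.integral_add)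
    show "integrable (sample {..<l}) (\<lambda>y. \<Sum>i<l. y i * ind y)"
      using component by (intro Bochner_Integration.integrable_sum) auto
    show "integrable (sample {..<l}) (\<lambda>y. s * ind y)"
      unfolding ind_def by (intro integrable_mult_right integrable_count_indicator) auto
  qed
  also have "(\<integral>y. (\<Sum>i<l. y i * ind y) \<partial>sample {..<l})
      = (\<Sum>i<l. \<integral>y. y i * ind y \<partial>sample {..<l})"
    using component by (intro Bochner_Integration.integral_sum) auto
  also have "(\<Sum>i<l. \<integral>y. y i * ind y \<partial>sample {..<l}) = real l * mu_plus mu sg l c"
  proof -
    have "(\<integral>y. y i * ind y \<partial>sample {..<l}) = mu_plus mu sg l c" if "i < l" for i
      using assms that unfolding ind_def mu_plus_eq_integral
      by (intro integral_component_times_count_indicator_swap) auto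
    then show ?thesis
      by simp
  qed
  finally show ?thesis
    by (simp add: ind_def conditional_increment_def F_xi_eq_integral)
qed

lemma integrable_increment:
  assumes "l \<le> n"
  shows "integrable (sample {..<n}) (\<lambda>\<zeta>. if accepted n l alpha t \<zeta> then \<Sum>i<n. \<zeta> i else 0)"
proof -
  let ?ind = "\<lambda>\<zeta>. if accepted n l alpha t \<zeta> then 1 else 0 :: real"
  have "(\<lambda>\<zeta>. \<Sum>i\<in>{l..<n}. \<zeta> i) \<in> borel_measurable (sample {..<n})"
    by (auto intro!: borel_measurable_sum measurable_sample_component)
  moreover have "(\<lambda>s. effective_threshold n l alpha t s) \<in> borel_measurable borel"
    unfolding effective_threshold_def by measurable
  moreover have "count_pos {..<l} \<in> borel_measurable (sample {..<n})"
    using assms by (intro borel_measurable_count_pos) auto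
  ultimately have ind: "?ind \<in> borel_measurable (sample {..<n})"
    unfolding accepted_iff_effective_threshold by measurable
  have "integrable (sample {..<n}) (\<lambda>\<zeta>. \<Sum>i<n. \<zeta> i * ?ind \<zeta>)"
  proof (rule Bochner_Integration.integrable_sum)
    fix i assume "i \<in> {..<n}"
    then show "integrable (sample {..<n}) (\<lambda>\<zeta>. \<zeta> i * ?ind \<zeta>)"
      by (intro Bochner_Integration.integrable_bound[OF integrable_sample_component]
          borel_measurable_times measurable_sample_component ind) auto
  qed
  moreover have "(\<lambda>\<zeta>. if accepted n l alpha t \<zeta> then \<Sum>i<n. \<zeta> i else 0)
      = (\<lambda>\<zeta>. \<Sum>i<n. \<zeta> i * ?ind \<zeta>)"
    by (simp add: fun_eq_iff)
  ultimately show ?thesis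
    by simp
qed

lemma expected_increment_le:
  assumes "1 \<le> l" "l < n"
    and t0: "\<And>s. t0 < s / real (n - l) \<longleftrightarrow>
      conditional_increment mu sg l (alpha * real n) s
        < conditional_increment mu sg l (alpha * real n - real (n - l)) s"
  shows "expected_increment n l mu sg alpha t \<le> expected_increment n l mu sg alpha t0"
proof -
  define G E where "G = {l..<n}" and "E = {..<l}"
  define h where "h u \<zeta> = (if accepted n l alpha u \<zeta> then \<Sum>i<n. \<zeta> i else 0)" for u \<zeta>
  define gain where
    "gain u s = conditional_increment mu sg l (effective_threshold n l alpha u s) s" for u s
  have split: "{..<n} = G \<union> E" "G \<inter> E = {}"
    using assms by (auto simp: G_def E_def)
  have integrable_h: "integrable (sample (G \<union> E)) (h u)" for u
    unfolding h_def split(1)[symmetric] using assms by (intro integrable_increment) auto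
  have h_merge: "h u (merge G E (x, y)) = (sum y E + sum x G) *
      (if effective_threshold n l alpha u (sum x G) < count_pos E y then 1 else 0)" for u x y
    unfolding h_def G_def E_def using assms by (intro increment_merge) auto
  have inner: "(\<integral>y. h t0 (merge G E (x, y)) - h t (merge G E (x, y)) \<partial>sample E)
      = gain t0 (sum x G) - gain t (sum x G)" for x
    unfolding h_merge gain_def using assms
    by (simp add: E_def integrable_sum_times_count_indicator
        integral_sum_times_count_indicator)
  have gain_le: "gain t s \<le> gain t0 s" for s
    using t0[of s] by (auto simp: gain_def effective_threshold_def)
  interpret product_sigma_finite "\<lambda>_. normal_measure mu sg"
    by (rule product_sigma_finite.intro)
       (simp add: prob_space_imp_sigma_finite prob_space_normal_measure)
  have "expected_increment n l mu sg alpha t0 - expected_increment n l mu sg alpha t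
      = (\<integral>\<zeta>. h t0 \<zeta> - h t \<zeta> \<partial>sample (G \<union> E))"
  proof -
    have "expected_increment n l mu sg alpha u = (\<integral>\<zeta>. h u \<zeta> \<partial>sample (G \<union> E))" for u
      unfolding split(1)[symmetric] by (simp add: expected_increment_def iid_normal_def h_def)
    then show ?thesis
      using integrable_h by simp
  qed
  also have "\<dots> = (\<integral>x. (\<integral>y. h t0 (merge G E (x, y)) - h t (merge G E (x, y)) \<partial>sample E)
                   \<partial>sample G)"
    using integrable_h split(2) by (intro product_integral_fold) (auto simp: G_def E_def)
  also have "\<dots> \<ge> 0"
    unfolding inner using gain_le by (intro Bochner_Integration.integral_nonneg) simp
  finally show ?thesis
    by simp
qed

end

theorem mainTheorem3:
  fixes n l :: nat and mu sg alpha :: real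
  assumes "1 \<le> l" and "l \<le> n - 1" and "sg > 0"
    and "0 \<le> alpha" and "alpha < 1"
  defines "delta \<equiv> real l / real n"
  defines "gamma \<equiv> alpha + delta - 1"
  defines "beta \<equiv> real l / real (n - l)"
  defines "t0 \<equiv> beta / (F_xi mu sg l (gamma * real n) - F_xi mu sg l (alpha * real n))
                 * (mu_plus mu sg l (alpha * real n) - mu_plus mu sg l (gamma * real n))"
  shows "\<forall>t::real. expected_increment n l mu sg alpha t \<le> expected_increment n l mu sg alpha t0"
proof
  fix t
  have "l < n" "0 < real (n - l)"
    using assms(1,2) by linarith+
  interpret normal_sample mu sg
    using assms(3) by unfold_locales
  have gamma_n: "gamma * real n = alpha * real n - real (n - l)"
    using \<open>l < n\<close> by (simp add: gamma_def delta_def of_nat_diff field_simps)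
  have F_gap: "0 < F_xi mu sg l (gamma * real n) - F_xi mu sg l (alpha * real n)"
    using F_xi_less_shift[of "alpha * real n" l "n - l" mu sg] assms(4,5) \<open>l < n\<close>
    by (simp add: gamma_n)
  define g where "g = real (n - l)"
  define gap where "gap = F_xi mu sg l (gamma * real n) - F_xi mu sg l (alpha * real n)"
  define loss where "loss = mu_plus mu sg l (alpha * real n) - mu_plus mu sg l (gamma * real n)"
  have t0_eq: "t0 = real l / g / gap * loss"
    by (simp add: t0_def beta_def g_def gap_def loss_def)
  have "0 < g" "0 < gap"
    using F_gap \<open>0 < real (n - l)\<close> by (simp_all add: g_def gap_def)
  then have "t0 < s / g \<longleftrightarrow> real l * loss < s * gap" for s
    unfolding t0_eq by (simp add: field_simps)
  then have "t0 < s / real (n - l) \<longleftrightarrow>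
      conditional_increment mu sg l (alpha * real n) s
        < conditional_increment mu sg l (alpha * real n - real (n - l)) s" for s
    by (simp add: g_def gap_def loss_def conditional_increment_def gamma_n algebra_simps)
  then show "expected_increment n l mu sg alpha t \<le> expected_increment n l mu sg alpha t0"
    by (rule expected_increment_le[OF assms(1) \<open>l < n\<close>])
qed

end
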